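(* Let $a>1$ and $C_j(n,a)=\binom{n}{j}\left(\frac{1+a}{2}\right)^{n-j}\left(\frac{1-a}{2}\right)^j$. Then for every $\lambda\in\mathbb{R}$, $$\lim_{n\to\infty}\sum_{j=0}^nC_j(n,a)e^{\lambda(1-2j/n)-\frac{(1-2j/n)^2}{2}}=e^{-\frac{a^2}{2}+a\lambda}.$$ In particular $\lim_{n\to\infty}\sum_{j=0}^nC_j(n,a)e^{-\frac{(1-2j/n)^2}{2}}=e^{-a^2/2}$ and $\lim_{n\to\infty}\sum_{j=0}^nC_j(n,a)e^{\frac a2(1-2j/n)-\frac{(1-2j/n)^2}{2}}=1$. *)

theory Defs
  imports "HOL-Analysis.Analysis"
begin

definition Cj :: "nat \<Rightarrow> nat \<Rightarrow> real \<Rightarrow> real" where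
  "Cj j n a = real (n choose j) * ((1 + a) / 2) ^ (n - j) * ((1 - a) / 2) ^ j"

end

theory Submission
  imports Defs
begin

text \<open>
  Put p = (1 + a)/2, q = (1 - a)/2 and expand the entire function F(x) = exp(l x - x^2/2)
  as a power series with coefficients F_k. The sum becomes sum_k F_k m_k(n), where
  m_k(n) = sum_j C_j(n,a) (1 - 2j/n)^k are the moments of the signed binomial weights. Their
  exponential generating series is (p exp(t/n) + q exp(-t/n))^n; because |p| + |q| = a, the
  factor is dominated coefficientwise by exp(at/n) and differs from it only from degree 2 on.
  Hence |m_k(n)| <= a^k and m_k(n) = a^k + O(k^2 a^k / n), and Tannery's theorem gives the
  limit sum_k F_k a^k = F(a).
\<close>

unbundle no vec_syntax
unbundle fps_syntax

definition fps_majorant :: "real fps \<Rightarrow> 'a::real_normed_div_algebra fps \<Rightarrow> bool" where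
  "fps_majorant Q P \<longleftrightarrow> (\<forall>k. norm (P $ k) \<le> Q $ k)"

lemma fps_majorant_nth_nonneg: "fps_majorant Q P \<Longrightarrow> 0 \<le> Q $ k"
  unfolding fps_majorant_def by (meson norm_ge_zero order_trans)

lemma fps_majorant_mult:
  assumes "fps_majorant Q P" "fps_majorant Q' P'"
  shows "fps_majorant (Q * Q') (P * P')"
  unfolding fps_majorant_def
proof
  fix k
  have "norm ((P * P') $ k) \<le> (\<Sum>i=0..k. norm (P $ i) * norm (P' $ (k - i)))"
    unfolding fps_mult_nth norm_mult[symmetric] by (rule norm_sum)
  also have "\<dots> \<le> (\<Sum>i=0..k. Q $ i * Q' $ (k - i))"
    using assms fps_majorant_nth_nonneg[OF assms(1)]
    by (intro sum_mono mult_mono) (auto simp: fps_majorant_def)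
  finally show "norm ((P * P') $ k) \<le> (Q * Q') $ k"
    by (simp add: fps_mult_nth)
qed

lemma fps_majorant_power: "fps_majorant Q P \<Longrightarrow> fps_majorant (Q ^ n) (P ^ n)"
proof (induction n)
  case 0
  show ?case by (simp add: fps_majorant_def)
next
  case Suc
  then show ?case by (simp add: fps_majorant_mult)
qed

lemma fps_majorant_sum:
  assumes "\<And>i. i \<in> S \<Longrightarrow> fps_majorant (Q i) (P i)"
  shows "fps_majorant (\<Sum>i\<in>S. Q i) (\<Sum>i\<in>S. P i)"
  unfolding fps_majorant_def fps_sum_nth
proof
  fix k
  have "norm (\<Sum>i\<in>S. P i $ k) \<le> (\<Sum>i\<in>S. norm (P i $ k))" by (rule norm_sum)
  also have "\<dots> \<le> (\<Sum>i\<in>S. Q i $ k)"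
    using assms by (intro sum_mono) (auto simp: fps_majorant_def)
  finally show "norm (\<Sum>i\<in>S. P i $ k) \<le> (\<Sum>i\<in>S. Q i $ k)" .
qed

lemma fps_majorant_exp: "c \<ge> 0 \<Longrightarrow> fps_majorant (fps_exp c) (fps_exp c)"
  unfolding fps_majorant_def by simp

lemma fps_majorant_power_diff:
  fixes P R :: "'a::real_normed_field fps"
  assumes "fps_majorant Q P" "fps_majorant Q R" "fps_majorant D (P - R)"
  shows "fps_majorant (of_nat n * D * Q ^ (n - 1)) (P ^ n - R ^ n)"
proof -
  have "(\<Sum>i<n. Q ^ (n - Suc i) * Q ^ i) = (\<Sum>i<n. Q ^ (n - 1))"
    by (intro sum.cong refl) (simp flip: power_add)
  then have "D * (\<Sum>i<n. Q ^ (n - Suc i) * Q ^ i) = of_nat n * D * Q ^ (n - 1)"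
    by simp
  moreover have "fps_majorant (D * (\<Sum>i<n. Q ^ (n - Suc i) * Q ^ i))
                   ((P - R) * (\<Sum>i<n. R ^ (n - Suc i) * P ^ i))"
    using assms by (intro fps_majorant_mult fps_majorant_sum fps_majorant_power)
  ultimately show ?thesis
    by (simp only: power_diff_sumr2)
qed

lemma fps_exp_binomial:
  fixes p q u v :: "'a::field_char_0"
  shows "(fps_const p * fps_exp u + fps_const q * fps_exp v) ^ n =
    (\<Sum>j\<le>n. fps_const (of_nat (n choose j) * p ^ (n - j) * q ^ j) *
              fps_exp (of_nat (n - j) * u + of_nat j * v))"
  unfolding add.commute[of "fps_const p * _"] binomial_ring
  by (simp add: power_mult_distrib fps_exp_power_mult fps_of_nat fps_exp_add_mult
       fps_const_mult[symmetric] mult_ac)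

definition Cj_moment :: "real \<Rightarrow> nat \<Rightarrow> nat \<Rightarrow> real" where
  "Cj_moment a n k = (\<Sum>j=0..n. Cj j n a * (1 - 2 * real j / real n) ^ k)"

definition Cj_step_fps :: "real \<Rightarrow> nat \<Rightarrow> real fps" where
  "Cj_step_fps a n =
     fps_const ((1 + a) / 2) * fps_exp (1 / n) + fps_const ((1 - a) / 2) * fps_exp (- 1 / n)"

lemma Cj_step_fps_power_nth:
  assumes "n > 0"
  shows "(Cj_step_fps a n ^ n) $ k = Cj_moment a n k / fact k"
proof -
  have "real (n - j) * (1 / n) + real j * (- 1 / n) = 1 - 2 * real j / real n" if "j \<le> n" for j
    using assms that by (simp add: field_simps)
  then show ?thesis
    unfolding Cj_step_fps_def fps_exp_binomial fps_sum_nth Cj_moment_def sum_divide_distrib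
      atLeast0AtMost
    by (intro sum.cong) (auto simp: Cj_def)
qed

lemma Cj_step_fps_nth: "Cj_step_fps a n $ k = (if even k then 1 else a) * (1 / n) ^ k / fact k"
proof -
  define x where "x = 1 / real n"
  have "Cj_step_fps a n $ k = ((1 + a) / 2 + (1 - a) / 2 * (- 1) ^ k) * x ^ k / fact k"
    unfolding Cj_step_fps_def x_def[symmetric] minus_divide_left[symmetric]
    by (simp add: power_minus' field_simps)
  also have "(1 + a) / 2 + (1 - a) / 2 * (- 1) ^ k = (if even k then 1 else a)"
    by (simp add: field_simps)
  finally show ?thesis
    unfolding x_def .
qed

lemma if_even_le_power:
  fixes a :: real
  assumes "a \<ge> 1"
  shows "(if even k then 1 else a) \<le> a ^ k"
  using assms by (auto intro: power_increasing[of 1 k a, simplified] elim!: oddE)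

lemma fps_majorant_Cj_step_fps:
  assumes "a \<ge> 1"
  shows "fps_majorant (fps_exp (a / n)) (Cj_step_fps a n)"
  unfolding fps_majorant_def Cj_step_fps_nth
proof
  fix k
  have "\<bar>(if even k then 1 else a) * (1 / real n) ^ k / fact k\<bar>
      = (if even k then 1 else a) * (1 / real n) ^ k / fact k"
    using assms by simp
  also have "\<dots> \<le> a ^ k * (1 / real n) ^ k / fact k"
    using if_even_le_power[OF assms] by (intro divide_right_mono mult_right_mono) auto
  finally show "norm ((if even k then 1 else a) * (1 / real n) ^ k / fact k) \<le> fps_exp (a / n) $ k"
    by (simp add: power_divide)
qed

lemma fps_majorant_Cj_step_fps_minus_exp:
  assumes "a \<ge> 1"
  shows "fps_majorant (fps_const ((a / n) ^ 2) * (fps_X ^ 2 * fps_exp (a / n)))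
           (Cj_step_fps a n - fps_exp (a / n))"
  unfolding fps_majorant_def
proof
  fix k :: nat
  consider "k < 2" | m where "k = m + 2"
    by (metis le_add_diff_inverse2 not_less)
  then show "norm ((Cj_step_fps a n - fps_exp (a / n)) $ k)
      \<le> (fps_const ((a / n) ^ 2) * (fps_X ^ 2 * fps_exp (a / n))) $ k"
  proof cases
    case 1
    then consider "k = 0" | "k = 1" by linarith
    then show ?thesis by cases (simp_all add: Cj_step_fps_nth fps_X_power_mult_nth)
  next
    case 2
    have pow: "(a / n) ^ k = a ^ k * (1 / n) ^ k"
      by (simp add: power_divide)
    then have "(fps_exp (a / n) - Cj_step_fps a n) $ k
        = (a ^ k - (if even k then 1 else a)) * (1 / n) ^ k / fact k"
      unfolding fps_sub_nth Cj_step_fps_nth fps_exp_nth of_nat_fact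
      by (simp only: diff_divide_distrib left_diff_distrib)
    then have "norm ((Cj_step_fps a n - fps_exp (a / n)) $ k)
        = \<bar>(a ^ k - (if even k then 1 else a)) * (1 / n) ^ k / fact k\<bar>"
      by (metis fps_sub_nth norm_minus_commute real_norm_def)
    also have "\<dots> = (a ^ k - (if even k then 1 else a)) * (1 / n) ^ k / fact k"
      using if_even_le_power[OF assms, of k] by simp
    also have "\<dots> \<le> a ^ k * (1 / n) ^ k / fact k"
      using assms by (intro divide_right_mono mult_right_mono) auto
    also have "\<dots> = (a / n) ^ 2 * (a / n) ^ m / fact k"
      unfolding pow[symmetric] unfolding 2 power_add by (simp only: mult.commute)
    also have "\<dots> \<le> (a / n) ^ 2 * (a / n) ^ m / fact m"
      using assms 2 by (intro divide_left_mono fact_mono) auto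
    also have "\<dots> = (fps_const ((a / n) ^ 2) * (fps_X ^ 2 * fps_exp (a / n))) $ k"
      by (simp add: 2 fps_X_power_mult_nth)
    finally show ?thesis .
  qed
qed

lemma abs_Cj_moment_le:
  assumes "a \<ge> 1"
  shows "\<bar>Cj_moment a n k\<bar> \<le> a ^ k"
proof (cases "n = 0")
  case True
  then show ?thesis
    using assms by (simp add: Cj_moment_def Cj_def)
next
  case False
  then have "fps_majorant (fps_exp (a / n) ^ n) (Cj_step_fps a n ^ n)"
    using assms by (intro fps_majorant_power fps_majorant_Cj_step_fps)
  then have "\<bar>Cj_moment a n k / fact k\<bar> \<le> a ^ k / fact k"
    using False by (simp add: fps_majorant_def Cj_step_fps_power_nth fps_exp_power_mult)
  then show ?thesis
    by (simp add: divide_le_cancel)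
qed

lemma fps_majorant_Cj_step_fps_power_minus_exp:
  assumes "a \<ge> 1" "n > 0"
  shows "fps_majorant (fps_const (a ^ 2 / n) * (fps_X ^ 2 * fps_exp a)) (Cj_step_fps a n ^ n - fps_exp a)"
proof -
  let ?E = "fps_exp (a / n)"
  have exp_power: "?E ^ n = fps_exp a"
    using assms by (simp add: fps_exp_power_mult)
  have "fps_majorant (of_nat n * (fps_const ((a / n) ^ 2) * (fps_X ^ 2 * ?E)) * ?E ^ (n - 1))
          (Cj_step_fps a n ^ n - ?E ^ n)"
    using assms by (intro fps_majorant_power_diff fps_majorant_Cj_step_fps
        fps_majorant_Cj_step_fps_minus_exp fps_majorant_exp) auto
  moreover have "real n * (a / n) ^ 2 = a ^ 2 / n"
    using assms by (simp add: power2_eq_square)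
  then have "of_nat n * fps_const ((a / n) ^ 2) = fps_const (a ^ 2 / n)"
    by (metis fps_const_mult fps_of_nat)
  moreover have "?E * ?E ^ (n - 1) = fps_exp a"
    using assms exp_power by (simp flip: power_Suc)
  moreover have "of_nat n * (fps_const ((a / n) ^ 2) * (fps_X ^ 2 * ?E)) * ?E ^ (n - 1)
      = (of_nat n * fps_const ((a / n) ^ 2)) * (fps_X ^ 2 * (?E * ?E ^ (n - 1)))"
    by (simp only: mult_ac)
  ultimately show ?thesis
    by (simp only: exp_power)
qed

lemma Cj_moment_error_le:
  assumes "a \<ge> 1" "n > 0"
  shows "\<bar>Cj_moment a n k - a ^ k\<bar> \<le> real (k * (k - 1)) * a ^ k / n"
proof -
  have "(Cj_step_fps a n ^ n - fps_exp a) $ k = (Cj_moment a n k - a ^ k) / fact k"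
    using assms by (simp add: Cj_step_fps_power_nth diff_divide_distrib)
  moreover have "(fps_const (a ^ 2 / n) * (fps_X ^ 2 * fps_exp a)) $ k
      = a ^ 2 / n * (if k < 2 then 0 else a ^ (k - 2) / fact (k - 2))"
    by (simp add: fps_X_power_mult_nth)
  ultimately have bound: "\<bar>Cj_moment a n k - a ^ k\<bar> / fact k
      \<le> a ^ 2 / n * (if k < 2 then 0 else a ^ (k - 2) / fact (k - 2))"
    using fps_majorant_Cj_step_fps_power_minus_exp[OF assms]
    unfolding fps_majorant_def by (metis abs_divide abs_of_pos fact_gt_zero real_norm_def)
  consider "k < 2" | m where "k = m + 2"
    by (metis le_add_diff_inverse2 not_less)
  then show ?thesis
  proof cases
    case 1
    then have "k * (k - 1) = 0"
      by (cases k) auto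
    then show ?thesis
      using bound 1 fact_gt_zero[of k, where ?'a = real] by (simp add: divide_le_0_iff)
  next
    case 2
    have "\<bar>Cj_moment a n k - a ^ k\<bar> \<le> fact k * (a ^ 2 / n * (a ^ m / fact m))"
      using bound 2 by (simp add: divide_le_eq mult.commute)
    also have "\<dots> = real (k * (k - 1)) * a ^ k / n"
      by (simp add: 2 algebra_simps power_add power2_eq_square add_divide_distrib)
    finally show ?thesis .
  qed
qed

lemma Cj_moment_tendsto:
  assumes "a \<ge> 1"
  shows "(\<lambda>n. Cj_moment a n k) \<longlonglongrightarrow> a ^ k"
proof (rule LIM_zero_cancel, rule Lim_null_comparison)
  show "\<forall>\<^sub>F n in sequentially. norm (Cj_moment a n k - a ^ k) \<le> real (k * (k - 1)) * a ^ k * (1 / n)"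
    using eventually_gt_at_top[of 0] by eventually_elim (use Cj_moment_error_le[OF assms] in simp)
  show "(\<lambda>n. real (k * (k - 1)) * a ^ k * (1 / real n)) \<longlonglongrightarrow> 0"
    by (intro tendsto_mult_right_zero lim_1_over_n)
qed

lemma Cj_sum_eval_fps_eq_suminf_moments:
  fixes F :: "real fps"
  assumes "fps_conv_radius F = \<infinity>"
  shows "(\<Sum>j=0..n. Cj j n a * eval_fps F (1 - 2 * real j / real n)) = (\<Sum>k. F $ k * Cj_moment a n k)"
proof -
  have summable: "summable (\<lambda>k. F $ k * x ^ k)" for x :: real
    using assms by (intro summable_fps) simp
  have "(\<Sum>j=0..n. Cj j n a * eval_fps F (1 - 2 * real j / real n))
      = (\<Sum>j=0..n. \<Sum>k. Cj j n a * (F $ k * (1 - 2 * real j / real n) ^ k))"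
    unfolding eval_fps_def by (intro sum.cong refl suminf_mult[symmetric] summable)
  also have "\<dots> = (\<Sum>k. \<Sum>j=0..n. Cj j n a * (F $ k * (1 - 2 * real j / real n) ^ k))"
    by (intro suminf_sum[symmetric] summable_mult summable)
  also have "\<dots> = (\<Sum>k. F $ k * Cj_moment a n k)"
    by (simp add: Cj_moment_def sum_distrib_left mult_ac)
  finally show ?thesis .
qed

lemma Cj_sum_eval_fps_tendsto:
  fixes F :: "real fps"
  assumes "a \<ge> 1" "fps_conv_radius F = \<infinity>"
  shows "(\<lambda>n. \<Sum>j=0..n. Cj j n a * eval_fps F (1 - 2 * real j / real n)) \<longlonglongrightarrow> eval_fps F a"
proof -
  have "(\<lambda>n. \<Sum>k. F $ k * Cj_moment a n k) \<longlonglongrightarrow> (\<Sum>k. F $ k * a ^ k)"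
  proof (rule tannerys_theorem[THEN conjunct2, THEN conjunct2])
    show "(\<lambda>n. F $ k * Cj_moment a n k) \<longlonglongrightarrow> F $ k * a ^ k" for k
      by (intro tendsto_mult_left Cj_moment_tendsto assms)
    have "norm (F $ k * Cj_moment a n k) \<le> norm (F $ k * a ^ k)" for k n
      using assms abs_Cj_moment_le[OF assms(1), of n k] by (simp add: abs_mult mult_left_mono)
    then show "\<forall>\<^sub>F (k, n) in at_top \<times>\<^sub>F sequentially. norm (F $ k * Cj_moment a n k) \<le> norm (F $ k * a ^ k)"
      by (simp add: always_eventually)
    show "summable (\<lambda>k. norm (F $ k * a ^ k))"
      using assms by (intro norm_summable_fps) simp
  qed simp
  then show ?thesis
    unfolding Cj_sum_eval_fps_eq_suminf_moments[OF assms(2)] by (simp add: eval_fps_def)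
qed

definition gauss_fps :: "real fps" where
  "gauss_fps = Abs_fps (\<lambda>k. if even k then (- 1 / 2) ^ (k div 2) / fact (k div 2) else 0)"

lemma gauss_fps_sums: "(\<lambda>k. gauss_fps $ k * x ^ k) sums exp (- (x ^ 2) / 2)"
proof -
  have "(\<lambda>m. (- (x ^ 2) / 2) ^ m /\<^sub>R fact m) sums exp (- (x ^ 2) / 2)"
    by (rule exp_converges)
  moreover have "(- (x ^ 2) / 2) ^ m /\<^sub>R fact m = gauss_fps $ (2 * m) * x ^ (2 * m)" for m
    by (simp add: gauss_fps_def field_simps power_minus' flip: power_mult)
  ultimately have "(\<lambda>m. gauss_fps $ (2 * m) * x ^ (2 * m)) sums exp (- (x ^ 2) / 2)"
    by simp
  then show ?thesis
    by (subst (asm) sums_mono_reindex[of "\<lambda>m. 2 * m"])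
       (auto simp: strict_mono_def gauss_fps_def elim!: oddE)
qed

lemma fps_conv_radius_gauss_fps: "fps_conv_radius gauss_fps = \<infinity>"
  unfolding fps_conv_radius_def
  by (rule conv_radius_inftyI'') (use gauss_fps_sums sums_summable in blast)

lemma eval_fps_gauss_fps: "eval_fps gauss_fps x = exp (- (x ^ 2) / 2)"
  unfolding eval_fps_def using gauss_fps_sums by (rule sums_unique[symmetric])

lemma Cj_sum_exp_tendsto:
  assumes "a \<ge> 1"
  shows "(\<lambda>n. \<Sum>j=0..n. Cj j n a *
            exp (l * (1 - 2 * real j / real n) - (1 - 2 * real j / real n) ^ 2 / 2))
          \<longlonglongrightarrow> exp (- (a ^ 2) / 2 + a * l)"
proof -
  let ?F = "fps_exp l * gauss_fps"
  have radius: "fps_conv_radius ?F = \<infinity>"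
    using fps_conv_radius_mult[of "fps_exp l" gauss_fps] by (simp add: fps_conv_radius_gauss_fps)
  have eval: "eval_fps ?F x = exp (l * x - x ^ 2 / 2)" for x
    by (simp add: eval_fps_mult fps_conv_radius_gauss_fps eval_fps_gauss_fps exp_add[symmetric])
  show ?thesis
    using Cj_sum_eval_fps_tendsto[OF assms radius] unfolding eval by (simp add: algebra_simps)
qed

theorem proposition5p2:
  fixes a :: real
  assumes "a > 1"
  shows "(\<forall>l::real. (\<lambda>n. \<Sum>j=0..n. Cj j n a *
            exp (l * (1 - 2 * real j / real n) - (1 - 2 * real j / real n)^2 / 2))
          \<longlonglongrightarrow> exp (- (a^2) / 2 + a * l)) \<and>
         (\<lambda>n. \<Sum>j=0..n. Cj j n a * exp (- ((1 - 2 * real j / real n)^2) / 2))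
          \<longlonglongrightarrow> exp (- (a^2) / 2) \<and>
         (\<lambda>n. \<Sum>j=0..n. Cj j n a *
            exp (a / 2 * (1 - 2 * real j / real n) - (1 - 2 * real j / real n)^2 / 2))
          \<longlonglongrightarrow> 1"
proof -
  have limit: "(\<lambda>n. \<Sum>j=0..n. Cj j n a *
            exp (l * (1 - 2 * real j / real n) - (1 - 2 * real j / real n)^2 / 2))
          \<longlonglongrightarrow> exp (- (a^2) / 2 + a * l)" for l
    using assms by (intro Cj_sum_exp_tendsto) simp
  have "- (a ^ 2) / 2 + a * (a / 2) = 0"
    by (simp add: power2_eq_square)
  then show ?thesis
    using limit[of 0] limit[of "a / 2"] by (intro conjI allI limit) simp_all
qed

end
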